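(* Let $\Lambda>\lambda>0$ and let $Q\subset\mathbb{R}^2$ be an open square, with Cartesian coordinates $(x,y)$ whose axes are parallel to the sides of $Q$. Let $\mu>0$ be the positive principal eigenvalue of $\mathcal{M}^+_{\lambda,\Lambda}$ in $Q$ and let $u$ be any corresponding principal eigenfunction, i.e. $-\mathcal{M}^+_{\lambda,\Lambda}(D^2u)=\mu u$ in $Q$, $u>0$ in $Q$, $u=0$ on $\partial Q$. Then $u$ is not a function of separable variables, i.e. there are no functions $f,g$ of one variable with $u(x,y)=f(x)\,g(y)$ in $Q$.
   Context: For $0<\lambda\le\Lambda$, the Pucci supremum operator is defined on $2\times 2$ real symmetric matrices $X$ by $\mathcal{M}^+_{\lambda,\Lambda}(X)=\lambda\sum_{e_i<0}e_i+\Lambda\sum_{e_i>0}e_i$, where $e_i$ are the eigenvalues of $X$. For a bounded Lipschitz domain $\Omega$, the positive principal eigenvalue is $\mu^+(\Omega)=\sup\{\mu\in\mathbb{R}:\exists\,\phi>0\text{ in }\Omega,\ \mathcal{M}^+_{\lambda,\Lambda}(D^2\phi)+\mu\phi\le 0\text{ in }\Omega\}$ (in the viscosity sense); there exists $\phi>0$ in $\Omega$ with $\mathcal{M}^+_{\lambda,\Lambda}(D^2\phi)+\mu^+(\Omega)\phi=0$ in $\Omega$, $\phi=0$ on $\partial\Omega$, called a principal eigenfunction. *)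

theory Defs
  imports "HOL-Analysis.Analysis"
begin

text \<open>A real symmetric 2x2 matrix is given by its entries [[p,q],[q,r]].\<close>

definition sym2_eig_lo :: "real \<Rightarrow> real \<Rightarrow> real \<Rightarrow> real" where
  "sym2_eig_lo p q r = (p + r) / 2 - sqrt (((p - r) / 2)^2 + q^2)"

definition sym2_eig_hi :: "real \<Rightarrow> real \<Rightarrow> real \<Rightarrow> real" where
  "sym2_eig_hi p q r = (p + r) / 2 + sqrt (((p - r) / 2)^2 + q^2)"

definition pucci_term :: "real \<Rightarrow> real \<Rightarrow> real \<Rightarrow> real" where
  "pucci_term lam Lam e = (if e < 0 then lam * e else if e > 0 then Lam * e else 0)"

definition pucci_plus :: "real \<Rightarrow> real \<Rightarrow> real \<Rightarrow> real \<Rightarrow> real \<Rightarrow> real" where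
  "pucci_plus lam Lam p q r =
     pucci_term lam Lam (sym2_eig_lo p q r) + pucci_term lam Lam (sym2_eig_hi p q r)"

definition C2_partials ::
  "(real \<times> real) set \<Rightarrow> (real \<times> real \<Rightarrow> real) \<Rightarrow> (real \<times> real \<Rightarrow> real)
     \<Rightarrow> (real \<times> real \<Rightarrow> real) \<Rightarrow> (real \<times> real \<Rightarrow> real) \<Rightarrow> bool" where
  "C2_partials S \<psi> \<psi>xx \<psi>xy \<psi>yy \<longleftrightarrow>
     (\<exists>\<psi>x \<psi>y \<psi>yx.
        continuous_on S \<psi> \<and> continuous_on S \<psi>x \<and> continuous_on S \<psi>y \<and>
        continuous_on S \<psi>xx \<and> continuous_on S \<psi>xy \<and> continuous_on S \<psi>yx \<and>
        continuous_on S \<psi>yy \<and>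
        (\<forall>x y. (x, y) \<in> S \<longrightarrow>
           ((\<lambda>t. \<psi> (t, y)) has_real_derivative \<psi>x (x, y)) (at x) \<and>
           ((\<lambda>t. \<psi> (x, t)) has_real_derivative \<psi>y (x, y)) (at y) \<and>
           ((\<lambda>t. \<psi>x (t, y)) has_real_derivative \<psi>xx (x, y)) (at x) \<and>
           ((\<lambda>t. \<psi>x (x, t)) has_real_derivative \<psi>xy (x, y)) (at y) \<and>
           ((\<lambda>t. \<psi>y (t, y)) has_real_derivative \<psi>yx (x, y)) (at x) \<and>
           ((\<lambda>t. \<psi>y (x, t)) has_real_derivative \<psi>yy (x, y)) (at y)))"

definition visc_super ::
  "real \<Rightarrow> real \<Rightarrow> real \<Rightarrow> (real \<times> real) set \<Rightarrow> (real \<times> real \<Rightarrow> real) \<Rightarrow> bool" where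
  "visc_super lam Lam \<mu> \<Omega> u \<longleftrightarrow>
     continuous_on \<Omega> u \<and>
     (\<forall>N \<psi> \<psi>xx \<psi>xy \<psi>yy z.
        open N \<and> z \<in> N \<and> N \<subseteq> \<Omega> \<and> C2_partials N \<psi> \<psi>xx \<psi>xy \<psi>yy \<and>
        (\<forall>w\<in>N. u w - \<psi> w \<ge> u z - \<psi> z)
        \<longrightarrow> pucci_plus lam Lam (\<psi>xx z) (\<psi>xy z) (\<psi>yy z) + \<mu> * u z \<le> 0)"

definition visc_sub ::
  "real \<Rightarrow> real \<Rightarrow> real \<Rightarrow> (real \<times> real) set \<Rightarrow> (real \<times> real \<Rightarrow> real) \<Rightarrow> bool" where
  "visc_sub lam Lam \<mu> \<Omega> u \<longleftrightarrow>
     continuous_on \<Omega> u \<and>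
     (\<forall>N \<psi> \<psi>xx \<psi>xy \<psi>yy z.
        open N \<and> z \<in> N \<and> N \<subseteq> \<Omega> \<and> C2_partials N \<psi> \<psi>xx \<psi>xy \<psi>yy \<and>
        (\<forall>w\<in>N. u w - \<psi> w \<le> u z - \<psi> z)
        \<longrightarrow> pucci_plus lam Lam (\<psi>xx z) (\<psi>xy z) (\<psi>yy z) + \<mu> * u z \<ge> 0)"

definition visc_solution ::
  "real \<Rightarrow> real \<Rightarrow> real \<Rightarrow> (real \<times> real) set \<Rightarrow> (real \<times> real \<Rightarrow> real) \<Rightarrow> bool" where
  "visc_solution lam Lam \<mu> \<Omega> u \<longleftrightarrow> visc_super lam Lam \<mu> \<Omega> u \<and> visc_sub lam Lam \<mu> \<Omega> u"

definition pucci_principal_eigenvalue ::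
  "real \<Rightarrow> real \<Rightarrow> (real \<times> real) set \<Rightarrow> real" where
  "pucci_principal_eigenvalue lam Lam \<Omega> =
     Sup {\<mu>. \<exists>\<phi>. (\<forall>z\<in>\<Omega>. \<phi> z > 0) \<and> visc_super lam Lam \<mu> \<Omega> \<phi>}"

end

(* Suppose u = F(x) G(y). Testing the viscosity inequalities with products of one-variable
   polynomials shows that each factor satisfies lam h'' + mu h >= 0 (so it is semiconcave) and,
   using a concave parabola below the other factor, h'' <= L h; by a Hopf-type barrier argument
   h then grows linearly away from its zero at the left end of its interval.  Near the corner
   (a, b) one can therefore touch u from below by a product of two concave parabolas whose slopes
   are bounded away from zero, at points where u is arbitrarily small.  The test function has a
   mixed derivative bounded below while its pure second derivatives contribute only O(u), and the
   supersolution inequality weighs the mixed derivative with Lam - lam: hence Lam = lam. *)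

theory Submission
  imports Defs
begin

definition cubic :: "real \<Rightarrow> real \<Rightarrow> real \<Rightarrow> real \<Rightarrow> real \<Rightarrow> real \<Rightarrow> real" where
  "cubic t0 c0 c1 c2 c3 t = c0 + c1 * (t - t0) + c2 * (t - t0)^2 + c3 * (t - t0)^3"

lemma cubic_at_center [simp]: "cubic t0 c0 c1 c2 c3 t0 = c0"
  by (simp add: cubic_def)

lemma cubic_constant [simp]: "cubic t0 c 0 0 0 t = c"
  by (simp add: cubic_def)

lemma continuous_on_cubic: "continuous_on S (cubic t0 c0 c1 c2 c3)"
  unfolding cubic_def by (intro continuous_intros)

lemma cubic_has_derivative:
  "(cubic t0 c0 c1 c2 c3 has_real_derivative c1 + 2*c2*(t - t0) + 3*c3*(t - t0)^2) (at t)"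
  unfolding cubic_def by (auto intro!: derivative_eq_intros simp: power2_eq_square)

lemma cubic_has_second_derivative:
  "((\<lambda>t. c1 + 2*c2*(t - t0) + 3*c3*(t - t0)^2) has_real_derivative 2*c2 + 6*c3*(t - t0)) (at t)"
  by (auto intro!: derivative_eq_intros simp: power2_eq_square)

lemma C2_partials_product:
  fixes P P' P'' R R' R'' :: "real \<Rightarrow> real"
  assumes "\<And>t. (P has_real_derivative P' t) (at t)" "\<And>t. (P' has_real_derivative P'' t) (at t)"
    and "continuous_on UNIV P''"
    and "\<And>t. (R has_real_derivative R' t) (at t)" "\<And>t. (R' has_real_derivative R'' t) (at t)"
    and "continuous_on UNIV R''"
  shows "C2_partials S (\<lambda>z. P (fst z) * R (snd z)) (\<lambda>z. P'' (fst z) * R (snd z))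
           (\<lambda>z. P' (fst z) * R' (snd z)) (\<lambda>z. P (fst z) * R'' (snd z))"
proof -
  have diff_cont: "continuous_on UNIV f" if "\<And>t. (f has_real_derivative f' t) (at t)"
    for f f' :: "real \<Rightarrow> real"
    by (rule DERIV_continuous_on, rule has_field_derivative_at_within, rule that)
  have on_fst: "continuous_on S (\<lambda>z. f (fst z))" and on_snd: "continuous_on S (\<lambda>z. f (snd z))"
    if "continuous_on UNIV f" for f :: "real \<Rightarrow> real"
    by (rule continuous_on_compose2[OF that continuous_on_fst[OF continuous_on_id]]; simp)
       (rule continuous_on_compose2[OF that continuous_on_snd[OF continuous_on_id]]; simp)
  have cont: "continuous_on S (\<lambda>z. P (fst z))" "continuous_on S (\<lambda>z. P' (fst z))"
    "continuous_on S (\<lambda>z. P'' (fst z))" "continuous_on S (\<lambda>z. R (snd z))"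
    "continuous_on S (\<lambda>z. R' (snd z))" "continuous_on S (\<lambda>z. R'' (snd z))"
    using on_fst[OF diff_cont[OF assms(1)]] on_fst[OF diff_cont[OF assms(2)]] on_fst[OF assms(3)]
      on_snd[OF diff_cont[OF assms(4)]] on_snd[OF diff_cont[OF assms(5)]] on_snd[OF assms(6)] .
  show ?thesis
    unfolding C2_partials_def
    apply (rule exI[of _ "\<lambda>z. P' (fst z) * R (snd z)"], rule exI[of _ "\<lambda>z. P (fst z) * R' (snd z)"],
        rule exI[of _ "\<lambda>z. P' (fst z) * R' (snd z)"])
    using assms by (auto intro!: cont continuous_on_mult DERIV_cmult DERIV_cmult_right)
qed

lemma C2_partials_cubic_product:
  "\<exists>Dxx Dxy Dyy. C2_partials S (\<lambda>z. cubic x0 p0 p1 p2 p3 (fst z) * cubic y0 r0 r1 r2 r3 (snd z)) Dxx Dxy Dyy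
     \<and> Dxx (x0, y0) = 2*p2*r0 \<and> Dxy (x0, y0) = p1*r1 \<and> Dyy (x0, y0) = 2*p0*r2"
proof (intro exI conjI)
  show "C2_partials S (\<lambda>z. cubic x0 p0 p1 p2 p3 (fst z) * cubic y0 r0 r1 r2 r3 (snd z))
      (\<lambda>z. (2*p2 + 6*p3*(fst z - x0)) * cubic y0 r0 r1 r2 r3 (snd z))
      (\<lambda>z. (p1 + 2*p2*(fst z - x0) + 3*p3*(fst z - x0)^2) * (r1 + 2*r2*(snd z - y0) + 3*r3*(snd z - y0)^2))
      (\<lambda>z. cubic x0 p0 p1 p2 p3 (fst z) * (2*r2 + 6*r3*(snd z - y0)))"
    by (rule C2_partials_product[OF cubic_has_derivative cubic_has_second_derivative _
          cubic_has_derivative cubic_has_second_derivative]; intro continuous_intros)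
qed simp_all

lemma visc_super_cubic_product:
  assumes "visc_super lam Lam \<mu> \<Omega> u" "open N" "(x0, y0) \<in> N" "N \<subseteq> \<Omega>"
    and "u (x0, y0) = p0 * r0"
    and "\<forall>(x, y)\<in>N. cubic x0 p0 p1 p2 p3 x * cubic y0 r0 r1 r2 r3 y \<le> u (x, y)"
  shows "pucci_plus lam Lam (2*p2*r0) (p1*r1) (2*p0*r2) + \<mu> * u (x0, y0) \<le> 0"
proof -
  define \<psi> where "\<psi> = (\<lambda>z. cubic x0 p0 p1 p2 p3 (fst z) * cubic y0 r0 r1 r2 r3 (snd z))"
  obtain Dxx Dxy Dyy where C2: "C2_partials N \<psi> Dxx Dxy Dyy"
    and at_center: "Dxx (x0, y0) = 2*p2*r0" "Dxy (x0, y0) = p1*r1" "Dyy (x0, y0) = 2*p0*r2"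
    using C2_partials_cubic_product unfolding \<psi>_def by blast
  have touch: "\<forall>w\<in>N. u (x0, y0) - \<psi> (x0, y0) \<le> u w - \<psi> w"
    using assms(5,6) by (auto simp: \<psi>_def)
  have test: "pucci_plus lam Lam (Dxx z) (Dxy z) (Dyy z) + \<mu> * u z \<le> 0"
    if "C2_partials N \<psi> Dxx Dxy Dyy" "\<forall>w\<in>N. u z - \<psi> z \<le> u w - \<psi> w" "z \<in> N" for \<psi> Dxx Dxy Dyy z
    using assms(1,2,4) that unfolding visc_super_def by blast
  show ?thesis
    using test[OF C2 touch assms(3)] unfolding at_center .
qed

lemma visc_sub_cubic_product:
  assumes "visc_sub lam Lam \<mu> \<Omega> u" "open N" "(x0, y0) \<in> N" "N \<subseteq> \<Omega>"
    and "u (x0, y0) = p0 * r0"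
    and "\<forall>(x, y)\<in>N. u (x, y) \<le> cubic x0 p0 p1 p2 p3 x * cubic y0 r0 r1 r2 r3 y"
  shows "0 \<le> pucci_plus lam Lam (2*p2*r0) (p1*r1) (2*p0*r2) + \<mu> * u (x0, y0)"
proof -
  define \<psi> where "\<psi> = (\<lambda>z. cubic x0 p0 p1 p2 p3 (fst z) * cubic y0 r0 r1 r2 r3 (snd z))"
  obtain Dxx Dxy Dyy where C2: "C2_partials N \<psi> Dxx Dxy Dyy"
    and at_center: "Dxx (x0, y0) = 2*p2*r0" "Dxy (x0, y0) = p1*r1" "Dyy (x0, y0) = 2*p0*r2"
    using C2_partials_cubic_product unfolding \<psi>_def by blast
  have touch: "\<forall>w\<in>N. u w - \<psi> w \<le> u (x0, y0) - \<psi> (x0, y0)"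
    using assms(5,6) by (auto simp: \<psi>_def)
  have test: "0 \<le> pucci_plus lam Lam (Dxx z) (Dxy z) (Dyy z) + \<mu> * u z"
    if "C2_partials N \<psi> Dxx Dxy Dyy" "\<forall>w\<in>N. u w - \<psi> w \<le> u z - \<psi> z" "z \<in> N" for \<psi> Dxx Dxy Dyy z
    using assms(1,2,4) that unfolding visc_sub_def by blast
  show ?thesis
    using test[OF C2 touch assms(3)] unfolding at_center .
qed

lemma visc_solution_transfer:
  assumes "visc_solution lam Lam \<mu> \<Omega> u" and "\<And>z. z \<in> \<Omega> \<Longrightarrow> v z = u z"
  shows "visc_solution lam Lam \<mu> \<Omega> v"
proof -
  have "continuous_on \<Omega> v"
    using assms continuous_on_cong unfolding visc_solution_def visc_super_def by metis
  moreover have "\<And>N w. N \<subseteq> \<Omega> \<Longrightarrow> w \<in> N \<Longrightarrow> v w = u w"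
    using assms(2) by blast
  ultimately show ?thesis
    using assms(1) unfolding visc_solution_def visc_super_def visc_sub_def by (smt (verit))
qed

lemma sym2_eig_lo_plus_hi: "sym2_eig_lo p q r + sym2_eig_hi p q r = p + r"
  unfolding sym2_eig_lo_def sym2_eig_hi_def by simp

lemma sym2_eig_gap: "2 * \<bar>q\<bar> \<le> sym2_eig_hi p q r - sym2_eig_lo p q r"
proof -
  have "\<bar>q\<bar> = sqrt (q^2)" by simp
  also have "\<dots> \<le> sqrt (((p - r) / 2)^2 + q^2)" by (intro real_sqrt_le_mono) simp
  finally show ?thesis unfolding sym2_eig_lo_def sym2_eig_hi_def by simp
qed

lemma pucci_term_ge:
  assumes "lam \<le> Lam"
  shows "lam * e \<le> pucci_term lam Lam e" and "Lam * e \<le> pucci_term lam Lam e"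
proof -
  have "Lam * e \<le> lam * e" if "e < 0" using assms that by (simp add: mult_right_mono_neg)
  moreover have "lam * e \<le> Lam * e" if "\<not> e < 0" using assms that by (simp add: mult_right_mono)
  ultimately show "lam * e \<le> pucci_term lam Lam e" "Lam * e \<le> pucci_term lam Lam e"
    unfolding pucci_term_def by auto
qed

lemma pucci_term_lower_bound:
  assumes "0 \<le> lam" "0 \<le> X" "0 \<le> pucci_term lam Lam e + X"
  shows "- X \<le> lam * e"
proof (cases "e < 0")
  case True
  then show ?thesis using assms(3) by (simp add: pucci_term_def)
next
  case False
  then have "0 \<le> lam * e" using assms(1) by simp
  then show ?thesis using assms(2) by linarith
qed

lemma pucci_term_scaled_lower_bound:
  assumes "0 < lam" "0 < c" "0 \<le> \<mu> * A" "0 \<le> pucci_term lam Lam (e * c) + \<mu> * A * c"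
  shows "- (\<mu> / lam) * A \<le> e"
proof -
  have "- (\<mu> * A * c) \<le> lam * (e * c)"
    using assms by (intro pucci_term_lower_bound) auto
  then have "(- (\<mu> / lam) * A) * (lam * c) \<le> e * (lam * c)"
    using assms(1) by (simp add: field_simps)
  then show ?thesis by (rule mult_right_le_imp_le) (use assms(1,2) in simp)
qed

lemma pucci_plus_diagonal:
  "pucci_plus lam Lam p 0 0 = pucci_term lam Lam p"
  "pucci_plus lam Lam 0 0 r = pucci_term lam Lam r"
  unfolding pucci_plus_def sym2_eig_lo_def sym2_eig_hi_def
  by (cases "p < 0"; cases "r < 0"; simp add: pucci_term_def)+

lemma pucci_plus_lower_bound:
  assumes "lam \<le> Lam"
  shows "(lam + Lam) / 2 * (p + r) + (Lam - lam) * \<bar>q\<bar> \<le> pucci_plus lam Lam p q r"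
proof -
  let ?l = "sym2_eig_lo p q r" and ?h = "sym2_eig_hi p q r"
  have "(Lam - lam) / 2 * (2 * \<bar>q\<bar>) \<le> (Lam - lam) / 2 * (?h - ?l)"
    using sym2_eig_gap assms by (intro mult_left_mono) auto
  moreover have "lam * ?l + Lam * ?h = (lam + Lam) / 2 * (?l + ?h) + (Lam - lam) / 2 * (?h - ?l)"
    by (simp add: field_simps)
  moreover have "lam * ?l + Lam * ?h \<le> pucci_plus lam Lam p q r"
    unfolding pucci_plus_def using pucci_term_ge[OF assms] by (intro add_mono)
  ultimately show ?thesis
    using sym2_eig_lo_plus_hi[of p q r] by simp
qed

text \<open>\<open>h'' \<ge> k\<close>, resp. \<open>h'' \<le> k\<close>, on \<open>I\<close> in the viscosity sense, tested with cubics.\<close>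

definition visc_d2_ge :: "real set \<Rightarrow> (real \<Rightarrow> real) \<Rightarrow> (real \<Rightarrow> real) \<Rightarrow> bool" where
  "visc_d2_ge I h k \<longleftrightarrow> (\<forall>J t0 c1 c2 c3. open J \<and> J \<subseteq> I \<and> t0 \<in> J \<and>
      (\<forall>t\<in>J. h t \<le> cubic t0 (h t0) c1 c2 c3 t) \<longrightarrow> k t0 \<le> 2 * c2)"

definition visc_d2_le :: "real set \<Rightarrow> (real \<Rightarrow> real) \<Rightarrow> (real \<Rightarrow> real) \<Rightarrow> bool" where
  "visc_d2_le I h k \<longleftrightarrow> (\<forall>J t0 c1 c2 c3. open J \<and> J \<subseteq> I \<and> t0 \<in> J \<and>
      (\<forall>t\<in>J. cubic t0 (h t0) c1 c2 c3 t \<le> h t) \<longrightarrow> 2 * c2 \<le> k t0)"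

lemma visc_d2_geI:
  "(\<And>J t0 c1 c2 c3. open J \<Longrightarrow> J \<subseteq> I \<Longrightarrow> t0 \<in> J \<Longrightarrow>
      \<forall>t\<in>J. h t \<le> cubic t0 (h t0) c1 c2 c3 t \<Longrightarrow> k t0 \<le> 2 * c2) \<Longrightarrow> visc_d2_ge I h k"
  unfolding visc_d2_ge_def by blast

lemma visc_d2_geD:
  "visc_d2_ge I h k \<Longrightarrow> open J \<Longrightarrow> J \<subseteq> I \<Longrightarrow> t0 \<in> J \<Longrightarrow>
      \<forall>t\<in>J. h t \<le> cubic t0 (h t0) c1 c2 c3 t \<Longrightarrow> k t0 \<le> 2 * c2"
  unfolding visc_d2_ge_def by blast

lemma visc_d2_leI:
  "(\<And>J t0 c1 c2 c3. open J \<Longrightarrow> J \<subseteq> I \<Longrightarrow> t0 \<in> J \<Longrightarrow>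
      \<forall>t\<in>J. cubic t0 (h t0) c1 c2 c3 t \<le> h t \<Longrightarrow> 2 * c2 \<le> k t0) \<Longrightarrow> visc_d2_le I h k"
  unfolding visc_d2_le_def by blast

lemma visc_d2_leD:
  "visc_d2_le I h k \<Longrightarrow> open J \<Longrightarrow> J \<subseteq> I \<Longrightarrow> t0 \<in> J \<Longrightarrow>
      \<forall>t\<in>J. cubic t0 (h t0) c1 c2 c3 t \<le> h t \<Longrightarrow> 2 * c2 \<le> k t0"
  unfolding visc_d2_le_def by blast

lemma visc_d2_ge_mono:
  assumes "visc_d2_ge I h k" "J \<subseteq> I" "\<And>t. t \<in> J \<Longrightarrow> k' t \<le> k t"
  shows "visc_d2_ge J h k'"
proof (rule visc_d2_geI)
  fix J' t0 c1 c2 c3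
  assume J': "open J'" "J' \<subseteq> J" "t0 \<in> J'" "\<forall>t\<in>J'. h t \<le> cubic t0 (h t0) c1 c2 c3 t"
  then have "k t0 \<le> 2 * c2" using assms(2) by (intro visc_d2_geD[OF assms(1)]) auto
  then show "k' t0 \<le> 2 * c2" using assms(3)[of t0] J' by auto
qed

lemma visc_d2_le_mono:
  assumes "visc_d2_le I h k" "J \<subseteq> I" "\<And>t. t \<in> J \<Longrightarrow> k t \<le> k' t"
  shows "visc_d2_le J h k'"
proof (rule visc_d2_leI)
  fix J' t0 c1 c2 c3
  assume J': "open J'" "J' \<subseteq> J" "t0 \<in> J'" "\<forall>t\<in>J'. cubic t0 (h t0) c1 c2 c3 t \<le> h t"
  then have "2 * c2 \<le> k t0" using assms(2) by (intro visc_d2_leD[OF assms(1)]) auto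
  then show "2 * c2 \<le> k' t0" using assms(3)[of t0] J' by auto
qed

lemma visc_d2_ge_chord_bound:
  fixes h :: "real \<Rightarrow> real"
  assumes "\<beta> < \<gamma>" "continuous_on {\<beta>..\<gamma>} h" "visc_d2_ge {\<beta><..<\<gamma>} h (\<lambda>_. -K)"
    and z: "z \<in> {\<beta><..<\<gamma>}"
  shows "h z \<le> h \<beta> + (h \<gamma> - h \<beta>) / (\<gamma> - \<beta>) * (z - \<beta>) + K / 2 * (z - \<beta>) * (\<gamma> - z)"
proof (rule ccontr)
  define L where "L = (h \<gamma> - h \<beta>) / (\<gamma> - \<beta>)"
  define gap where "gap = h z - (h \<beta> + L * (z - \<beta>) + K / 2 * (z - \<beta>) * (\<gamma> - z))"
  assume "\<not> ?thesis"
  then have gap: "0 < gap" unfolding gap_def L_def by simp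
  have z_pos: "0 < (z - \<beta>) * (\<gamma> - z)" using z by simp
  define \<epsilon> where "\<epsilon> = gap / (2 * ((z - \<beta>) * (\<gamma> - z)))"
  have \<epsilon>: "0 < \<epsilon>" "\<epsilon> * ((z - \<beta>) * (\<gamma> - z)) = gap / 2"
    unfolding \<epsilon>_def using gap z_pos by (simp, simp add: field_simps)
  define k where "k = K / 2 + \<epsilon>"
  \<comment> \<open>subtracting a slightly more concave parabola than allowed leaves an interior maximum\<close>
  define E where "E t = h t - (h \<beta> + L * (t - \<beta>)) - k * (t - \<beta>) * (\<gamma> - t)" for t
  have cont: "continuous_on {\<beta>..\<gamma>} E" unfolding E_def by (intro continuous_intros assms(2))
  obtain t1 where t1: "t1 \<in> {\<beta>..\<gamma>}" "\<forall>t\<in>{\<beta>..\<gamma>}. E t \<le> E t1"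
    using continuous_attains_sup[OF compact_Icc _ cont] assms(1) by auto
  have "E z = gap / 2" using \<epsilon>(2) unfolding E_def k_def gap_def by (simp add: field_simps)
  moreover have "E z \<le> E t1" using t1(2) z by auto
  ultimately have "0 < E t1" using gap by linarith
  moreover have "E \<beta> = 0" "E \<gamma> = 0" unfolding E_def L_def using assms(1) by simp_all
  ultimately have t1_in: "t1 \<in> {\<beta><..<\<gamma>}"
    using t1(1) by (cases "t1 = \<beta>"; cases "t1 = \<gamma>") auto
  have "\<forall>t\<in>{\<beta><..<\<gamma>}. h t \<le> cubic t1 (h t1) (L + k * (\<beta> + \<gamma> - 2 * t1)) (-k) 0 t"
  proof
    fix t assume "t \<in> {\<beta><..<\<gamma>}"
    have "cubic t1 (h t1) (L + k * (\<beta> + \<gamma> - 2 * t1)) (-k) 0 t - h t = E t1 - E t"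
      unfolding E_def cubic_def by (simp add: field_simps power2_eq_square)
    moreover have "E t \<le> E t1" using t1(2) \<open>t \<in> {\<beta><..<\<gamma>}\<close> by auto
    ultimately show "h t \<le> cubic t1 (h t1) (L + k * (\<beta> + \<gamma> - 2 * t1)) (-k) 0 t"
      by linarith
  qed
  then have "-K \<le> 2 * (-k)"
    by (rule visc_d2_geD[OF assms(3) open_greaterThanLessThan order_refl t1_in])
  then show False unfolding k_def using \<epsilon>(1) by simp
qed

lemma touching_parabola_of_midpoint_bound:
  fixes h :: "real \<Rightarrow> real"
  assumes "0 < \<eta>" "continuous_on {\<alpha>..\<alpha>+\<eta>} h" "h \<alpha> = 0"
    and mid: "h (\<alpha> + \<eta>/2) \<le> h (\<alpha>+\<eta>) / 2 + K/8 * \<eta>^2"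
  shows "\<exists>t0\<in>{\<alpha><..<\<alpha>+\<eta>}. \<forall>t\<in>{\<alpha>..\<alpha>+\<eta>}.
           cubic t0 (h t0) (h (\<alpha>+\<eta>) / \<eta> + K/2 * (2*\<alpha> + \<eta> - 2*t0)) (-K/2) 0 t \<le> h t"
proof -
  define p where "p = h (\<alpha>+\<eta>) / \<eta>"
  define D where "D t = h t - (p * (t - \<alpha>) + K/2 * (t - \<alpha>) * (\<alpha> + \<eta> - t))" for t
  have cont: "continuous_on {\<alpha>..\<alpha>+\<eta>} D" unfolding D_def by (intro continuous_intros assms(2))
  obtain tm where tm: "tm \<in> {\<alpha>..\<alpha>+\<eta>}" "\<forall>t\<in>{\<alpha>..\<alpha>+\<eta>}. D tm \<le> D t"
    using continuous_attains_inf[OF compact_Icc _ cont] assms(1) by auto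
  have ends: "D \<alpha> = 0" "D (\<alpha>+\<eta>) = 0" unfolding D_def p_def using assms(1,3) by simp_all
  have "D (\<alpha> + \<eta>/2) \<le> 0"
    using mid assms(1) unfolding D_def p_def by (simp add: field_simps power2_eq_square)
  obtain t0 where t0: "t0 \<in> {\<alpha><..<\<alpha>+\<eta>}" "\<forall>t\<in>{\<alpha>..\<alpha>+\<eta>}. D t0 \<le> D t"
  proof (cases "tm \<in> {\<alpha><..<\<alpha>+\<eta>}")
    case True
    then show ?thesis using that tm by blast
  next
    case False
    then have "D tm = 0" using tm(1) ends by (cases "tm = \<alpha>") auto
    then show ?thesis using that[of "\<alpha> + \<eta>/2"] tm(2) \<open>D (\<alpha> + \<eta>/2) \<le> 0\<close> assms(1) by force
  qed
  have "cubic t0 (h t0) (p + K/2 * (2*\<alpha> + \<eta> - 2*t0)) (-K/2) 0 t \<le> h t" if "t \<in> {\<alpha>..\<alpha>+\<eta>}" for t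
  proof -
    have "h t - cubic t0 (h t0) (p + K/2 * (2*\<alpha> + \<eta> - 2*t0)) (-K/2) 0 t = D t - D t0"
      unfolding D_def cubic_def by (simp add: field_simps power2_eq_square)
    moreover have "D t0 \<le> D t" using t0(2) that by auto
    ultimately show ?thesis by linarith
  qed
  then show ?thesis using t0(1) unfolding p_def by blast
qed

lemma visc_d2_ge_touching_parabola:
  fixes h :: "real \<Rightarrow> real"
  assumes "0 < \<eta>" "continuous_on {\<alpha>..\<alpha>+\<eta>} h" "h \<alpha> = 0"
    and "0 \<le> K" "visc_d2_ge {\<alpha><..<\<alpha>+\<eta>} h (\<lambda>_. -K)"
  shows "\<exists>t0\<in>{\<alpha><..<\<alpha>+\<eta>}. \<exists>\<sigma>. h (\<alpha>+\<eta>) / \<eta> - K * \<eta> / 2 \<le> \<sigma> \<and>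
           (\<forall>t\<in>{\<alpha>..\<alpha>+\<eta>}. cubic t0 (h t0) \<sigma> (-K/2) 0 t \<le> h t)"
proof -
  have "h (\<alpha> + \<eta>/2) \<le> h \<alpha> + (h (\<alpha>+\<eta>) - h \<alpha>) / (\<alpha> + \<eta> - \<alpha>) * (\<alpha> + \<eta>/2 - \<alpha>)
      + K/2 * (\<alpha> + \<eta>/2 - \<alpha>) * (\<alpha> + \<eta> - (\<alpha> + \<eta>/2))"
    by (rule visc_d2_ge_chord_bound) (use assms in auto)
  also have "\<dots> = h (\<alpha>+\<eta>) / 2 + K/8 * \<eta>^2"
    using assms(1,3) by (simp add: field_simps power2_eq_square)
  finally obtain t0 where t0: "t0 \<in> {\<alpha><..<\<alpha>+\<eta>}" and touch: "\<forall>t\<in>{\<alpha>..\<alpha>+\<eta>}.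
      cubic t0 (h t0) (h (\<alpha>+\<eta>) / \<eta> + K/2 * (2*\<alpha> + \<eta> - 2*t0)) (-K/2) 0 t \<le> h t"
    using touching_parabola_of_midpoint_bound[OF assms(1-3)] by blast
  have "K/2 * (-\<eta>) \<le> K/2 * (2*\<alpha> + \<eta> - 2*t0)"
    using t0 assms(4) by (intro mult_left_mono) auto
  then show ?thesis
    using t0 touch by (intro bexI[OF _ t0] exI[of _ "h (\<alpha>+\<eta>) / \<eta> + K/2 * (2*\<alpha> + \<eta> - 2*t0)"]) auto
qed

lemma cubic_barrier_below:
  fixes h :: "real \<Rightarrow> real"
  assumes \<eta>: "0 < \<eta>" "\<eta> * (L + 1) \<le> 1" and L: "0 < L" and c: "0 < c"
    and cont: "continuous_on {\<alpha>..\<alpha>+\<eta>} h" and d2: "visc_d2_le {\<alpha><..<\<alpha>+\<eta>} h (\<lambda>t. L * h t)"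
    and ends: "0 \<le> h \<alpha>" "c * (\<eta> + L * \<eta>^3) \<le> h (\<alpha> + \<eta>)"
    and t: "t \<in> {\<alpha>..\<alpha>+\<eta>}"
  shows "c * ((t - \<alpha>) + L * (t - \<alpha>)^3) \<le> h t"
proof (rule ccontr)
  assume below: "\<not> ?thesis"
  \<comment> \<open>the barrier's second derivative \<open>6 c L (t - \<alpha>)\<close> beats \<open>L\<close> times the barrier while \<open>L (t - \<alpha>)\<^sup>2 < 1\<close>,
    so it cannot touch \<open>h\<close> from below inside\<close>
  define D where "D t = h t - c * ((t - \<alpha>) + L * (t - \<alpha>)^3)" for t
  have cont_D: "continuous_on {\<alpha>..\<alpha>+\<eta>} D" unfolding D_def by (intro continuous_intros cont)
  obtain t1 where t1: "t1 \<in> {\<alpha>..\<alpha>+\<eta>}" "\<forall>t\<in>{\<alpha>..\<alpha>+\<eta>}. D t1 \<le> D t"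
    using continuous_attains_inf[OF compact_Icc _ cont_D] \<eta>(1) by auto
  have "D t1 < 0" using below t t1(2) unfolding D_def by force
  moreover have "0 \<le> D \<alpha>" "0 \<le> D (\<alpha>+\<eta>)" unfolding D_def using ends by simp_all
  ultimately have t1_in: "t1 \<in> {\<alpha><..<\<alpha>+\<eta>}"
    using t1(1) by (cases "t1 = \<alpha>"; cases "t1 = \<alpha>+\<eta>") auto
  define X where "X = t1 - \<alpha>"
  have X: "0 < X" "X < \<eta>" using t1_in unfolding X_def by auto
  have touch: "\<forall>t\<in>{\<alpha><..<\<alpha>+\<eta>}. cubic t1 (h t1) (c * (1 + 3*L*X^2)) (c * (3*L*X)) (c * L) t \<le> h t"
  proof
    fix t assume "t \<in> {\<alpha><..<\<alpha>+\<eta>}"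
    then have "D t1 \<le> D t" using t1(2) by auto
    moreover have "h t - cubic t1 (h t1) (c * (1 + 3*L*X^2)) (c * (3*L*X)) (c * L) t = D t - D t1"
      unfolding D_def cubic_def X_def by (simp add: algebra_simps power2_eq_square power3_eq_cube)
    ultimately show "cubic t1 (h t1) (c * (1 + 3*L*X^2)) (c * (3*L*X)) (c * L) t \<le> h t" by linarith
  qed
  have "2 * (c * (3*L*X)) \<le> L * h t1"
    by (rule visc_d2_leD[OF d2 open_greaterThanLessThan order_refl t1_in touch])
  also have "\<dots> < L * (c * (X + L * X^3))"
    using \<open>D t1 < 0\<close> L unfolding D_def X_def by simp
  finally have "(c * L) * (6 * X) < (c * L) * (X + L * X^3)"
    by (simp add: algebra_simps)
  then have "6 * X < X + L * X^3"
    using c L by (simp add: mult_less_cancel_left_pos)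
  then have "X * 5 < X * (L * X^2)"
    by (simp add: algebra_simps power2_eq_square power3_eq_cube)
  then have "5 < L * X^2"
    using X(1) by (simp add: mult_less_cancel_left_pos)
  moreover have "L * X^2 < 1"
  proof -
    have "(L + 1) * X < (L + 1) * \<eta>" using X(2) L by (intro mult_strict_left_mono) auto
    then have LX: "(L + 1) * X < 1" using \<eta>(2) by (simp add: algebra_simps)
    moreover have "0 \<le> L * X" using L X(1) by simp
    ultimately have "X < 1" by (simp add: algebra_simps)
    have "L * X^2 \<le> ((L + 1) * X) * X" using L by (simp add: power2_eq_square algebra_simps)
    also have "\<dots> < 1 * X" using LX X(1) by (intro mult_strict_right_mono)
    finally show ?thesis using \<open>X < 1\<close> by simp
  qed
  ultimately show False by linarith
qed

lemma visc_d2_le_linear_growth: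
  fixes h :: "real \<Rightarrow> real"
  assumes "0 < \<eta>" "continuous_on {\<alpha>..\<alpha>+\<eta>} h" "h \<alpha> = 0" "\<forall>t\<in>{\<alpha><..\<alpha>+\<eta>}. 0 < h t"
    and L: "0 < L" and d2: "visc_d2_le {\<alpha><..<\<alpha>+\<eta>} h (\<lambda>t. L * h t)"
  shows "\<exists>c>0. \<exists>\<eta>0>0. \<eta>0 \<le> \<eta> \<and> (\<forall>t\<in>{\<alpha>..\<alpha>+\<eta>0}. c * (t - \<alpha>) \<le> h t)"
proof -
  define \<eta>0 where "\<eta>0 = min \<eta> (1 / (L + 1))"
  have \<eta>0: "0 < \<eta>0" "\<eta>0 \<le> \<eta>" "\<eta>0 * (L + 1) \<le> 1"
    unfolding \<eta>0_def using assms(1) L by (auto simp: min_def field_simps)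
  define c where "c = h (\<alpha>+\<eta>0) / (\<eta>0 + L * \<eta>0^3)"
  have w_end: "0 < \<eta>0 + L * \<eta>0^3" using \<eta>0(1) L by (simp add: add_pos_nonneg)
  have c: "0 < c" unfolding c_def using w_end assms(4) \<eta>0 by auto
  have "c * (t - \<alpha>) \<le> h t" if t: "t \<in> {\<alpha>..\<alpha>+\<eta>0}" for t
  proof -
    have "c * (t - \<alpha>) \<le> c * ((t - \<alpha>) + L * (t - \<alpha>)^3)" using t c L by simp
    also have "\<dots> \<le> h t"
    proof (rule cubic_barrier_below[OF \<eta>0(1,3) L c _ _ _ _ t])
      show "continuous_on {\<alpha>..\<alpha>+\<eta>0} h" by (rule continuous_on_subset[OF assms(2)]) (use \<eta>0 in auto)
      show "visc_d2_le {\<alpha><..<\<alpha>+\<eta>0} h (\<lambda>t. L * h t)" by (rule visc_d2_le_mono[OF d2]) (use \<eta>0 in auto)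
      show "c * (\<eta>0 + L * \<eta>0^3) \<le> h (\<alpha> + \<eta>0)" unfolding c_def using w_end by simp
    qed (use assms(3) in simp)
    finally show ?thesis .
  qed
  then show ?thesis using c \<eta>0 by blast
qed

locale dirichlet_profile =
  fixes h :: "real \<Rightarrow> real" and \<alpha> \<omega> :: real
  assumes interval: "\<alpha> < \<omega>" and continuous: "continuous_on {\<alpha>..\<omega>} h"
    and left_zero: "h \<alpha> = 0" and right_zero: "h \<omega> = 0"
    and positive: "\<forall>t\<in>{\<alpha><..<\<omega>}. 0 < h t"
begin

lemma nonneg: "t \<in> {\<alpha>..\<omega>} \<Longrightarrow> 0 \<le> h t"
  using positive left_zero right_zero by (cases "t = \<alpha> \<or> t = \<omega>") (auto simp: less_eq_real_def)

lemma interior_maximum: "\<exists>tm\<in>{\<alpha><..<\<omega>}. \<forall>t\<in>{\<alpha>..\<omega>}. h t \<le> h tm"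
proof -
  obtain tm where tm: "tm \<in> {\<alpha>..\<omega>}" "\<forall>t\<in>{\<alpha>..\<omega>}. h t \<le> h tm"
    using continuous_attains_sup[OF compact_Icc _ continuous] interval by auto
  have "0 < h ((\<alpha> + \<omega>) / 2)" using positive interval by auto
  moreover have "h ((\<alpha> + \<omega>) / 2) \<le> h tm" by (rule bspec[OF tm(2)]) (use interval in auto)
  ultimately have "0 < h tm" by linarith
  then have "tm \<in> {\<alpha><..<\<omega>}" using tm(1) left_zero right_zero by (cases "tm = \<alpha> \<or> tm = \<omega>") auto
  then show ?thesis using tm(2) by blast
qed

lemma semiconcave:
  assumes "0 \<le> C" "visc_d2_ge {\<alpha><..<\<omega>} h (\<lambda>t. - C * h t)"
  shows "\<exists>K\<ge>0. visc_d2_ge {\<alpha><..<\<omega>} h (\<lambda>_. -K)"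
proof -
  obtain tm where "tm \<in> {\<alpha><..<\<omega>}" "\<forall>t\<in>{\<alpha>..\<omega>}. h t \<le> h tm"
    using interior_maximum by blast
  then have "visc_d2_ge {\<alpha><..<\<omega>} h (\<lambda>_. - (C * h tm))"
    using assms by (intro visc_d2_ge_mono[OF assms(2) order_refl]) (auto intro: mult_left_mono)
  moreover have "0 \<le> C * h tm" using assms(1) nonneg \<open>tm \<in> {\<alpha><..<\<omega>}\<close> by simp
  ultimately show ?thesis by blast
qed

lemma touching_parabola:
  assumes "0 \<le> K" "visc_d2_ge {\<alpha><..<\<omega>} h (\<lambda>_. -K)"
  shows "\<exists>t0\<in>{\<alpha><..<\<omega>}. \<exists>\<sigma>. \<forall>t\<in>{\<alpha><..<\<omega>}. cubic t0 (h t0) \<sigma> (-K/2) 0 t \<le> h t"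
  using visc_d2_ge_touching_parabola[of "\<omega> - \<alpha>" \<alpha> h K] interval continuous left_zero assms by force

lemma linear_growth_near_left_end:
  assumes "0 < L" "visc_d2_le {\<alpha><..<\<omega>} h (\<lambda>t. L * h t)"
  shows "\<exists>c>0. \<exists>\<eta>0>0. \<alpha> + \<eta>0 \<le> \<omega> \<and> (\<forall>t\<in>{\<alpha>..\<alpha>+\<eta>0}. c * (t - \<alpha>) \<le> h t)"
proof -
  define \<eta> where "\<eta> = (\<omega> - \<alpha>) / 2"
  have \<eta>: "0 < \<eta>" "\<alpha> + \<eta> < \<omega>" unfolding \<eta>_def using interval by (auto simp: field_simps)
  have d2: "visc_d2_le {\<alpha><..<\<alpha>+\<eta>} h (\<lambda>t. L * h t)"
    by (rule visc_d2_le_mono[OF assms(2)]) (use \<eta> in auto)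
  have cont: "continuous_on {\<alpha>..\<alpha>+\<eta>} h" by (rule continuous_on_subset[OF continuous]) (use \<eta> in auto)
  have pos: "\<forall>t\<in>{\<alpha><..\<alpha>+\<eta>}. 0 < h t" using positive \<eta> by auto
  show ?thesis
    using visc_d2_le_linear_growth[OF \<eta>(1) cont left_zero pos assms(1) d2] \<eta>(2) by fastforce
qed

lemma touching_parabolas_near_left_end:
  assumes K: "0 \<le> K" "visc_d2_ge {\<alpha><..<\<omega>} h (\<lambda>_. -K)"
    and L: "0 < L" "visc_d2_le {\<alpha><..<\<omega>} h (\<lambda>t. L * h t)"
  shows "\<exists>c>0. \<forall>\<epsilon>>0. \<exists>\<eta> t0 \<sigma>. 0 < \<eta> \<and> \<alpha> + \<eta> \<le> \<omega> \<and> t0 \<in> {\<alpha><..<\<alpha>+\<eta>} \<and> h t0 < \<epsilon> \<and>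
           c \<le> \<sigma> \<and> (\<forall>t\<in>{\<alpha><..<\<alpha>+\<eta>}. cubic t0 (h t0) \<sigma> (-K/2) 0 t \<le> h t)"
proof -
  obtain c \<eta>0 where c: "0 < c" "0 < \<eta>0" "\<alpha> + \<eta>0 \<le> \<omega>"
    and growth: "\<forall>t\<in>{\<alpha>..\<alpha>+\<eta>0}. c * (t - \<alpha>) \<le> h t"
    using linear_growth_near_left_end[OF L] by blast
  have "\<exists>\<eta> t0 \<sigma>. 0 < \<eta> \<and> \<alpha> + \<eta> \<le> \<omega> \<and> t0 \<in> {\<alpha><..<\<alpha>+\<eta>} \<and> h t0 < \<epsilon> \<and>
           c/2 \<le> \<sigma> \<and> (\<forall>t\<in>{\<alpha><..<\<alpha>+\<eta>}. cubic t0 (h t0) \<sigma> (-K/2) 0 t \<le> h t)"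
    if "0 < \<epsilon>" for \<epsilon>
  proof -
    obtain \<delta> where \<delta>: "0 < \<delta>" "\<forall>t\<in>{\<alpha>..\<omega>}. dist t \<alpha> < \<delta> \<longrightarrow> dist (h t) (h \<alpha>) < \<epsilon>"
      using continuous \<open>0 < \<epsilon>\<close> interval unfolding continuous_on_iff by (meson atLeastAtMost_iff less_imp_le order_refl)
    define \<eta> where "\<eta> = min \<eta>0 (min (\<delta>/2) (c / (K + 1)))"
    have "\<eta> \<le> c / (K + 1)" unfolding \<eta>_def by simp
    then have "\<eta> * (K + 1) \<le> c" using K(1) by (simp add: pos_le_divide_eq)
    moreover have "0 < \<eta>" "\<eta> \<le> \<eta>0" "\<eta> < \<delta>" unfolding \<eta>_def using c \<delta>(1) K(1) by auto
    ultimately have \<eta>: "0 < \<eta>" "\<eta> \<le> \<eta>0" "\<eta> < \<delta>" "\<eta> * (K + 1) \<le> c" by auto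
    have d2_ge: "visc_d2_ge {\<alpha><..<\<alpha>+\<eta>} h (\<lambda>_. -K)"
      by (rule visc_d2_ge_mono[OF K(2)]) (use \<eta> c in auto)
    have cont\<eta>: "continuous_on {\<alpha>..\<alpha>+\<eta>} h" by (rule continuous_on_subset[OF continuous]) (use \<eta> c in auto)
    obtain t0 \<sigma> where t0: "t0 \<in> {\<alpha><..<\<alpha>+\<eta>}" and \<sigma>: "h (\<alpha>+\<eta>) / \<eta> - K * \<eta> / 2 \<le> \<sigma>"
      and touch: "\<forall>t\<in>{\<alpha>..\<alpha>+\<eta>}. cubic t0 (h t0) \<sigma> (-K/2) 0 t \<le> h t"
      using visc_d2_ge_touching_parabola[OF \<eta>(1) cont\<eta> left_zero K(1) d2_ge] by blast
    have "c * (\<alpha> + \<eta> - \<alpha>) \<le> h (\<alpha>+\<eta>)" by (rule bspec[OF growth]) (use \<eta> in auto)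
    then have "c * \<eta> \<le> h (\<alpha>+\<eta>)" by simp
    then have "c \<le> h (\<alpha>+\<eta>) / \<eta>" using \<eta>(1) by (simp add: field_simps)
    moreover have "K * \<eta> \<le> c" using \<eta>(1,4) by (simp add: algebra_simps)
    ultimately have "c/2 \<le> \<sigma>" using \<sigma> by linarith
    moreover have "h t0 < \<epsilon>"
      using \<delta>(2)[rule_format, of t0] t0 \<eta> c left_zero by (auto simp: dist_real_def)
    ultimately show ?thesis
      using \<eta> c t0 touch by (intro exI[of _ \<eta>] exI[of _ t0] exI[of _ \<sigma>]) auto
  qed
  then show ?thesis using c(1) by (intro exI[of _ "c/2"]) auto
qed

end

locale separable_solution =
  F: dirichlet_profile F a a' + G: dirichlet_profile G b b'
  for F G :: "real \<Rightarrow> real" and a a' b b' :: real +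
  fixes lam Lam \<mu> :: real
  assumes ellipticity: "0 < lam" "lam \<le> Lam" and eigenvalue_nonneg: "0 \<le> \<mu>"
    and solution: "visc_solution lam Lam \<mu> ({a<..<a'} \<times> {b<..<b'}) (\<lambda>z. F (fst z) * G (snd z))"
begin

lemma product_visc_sub: "visc_sub lam Lam \<mu> ({a<..<a'} \<times> {b<..<b'}) (\<lambda>z. F (fst z) * G (snd z))"
  and product_visc_super: "visc_super lam Lam \<mu> ({a<..<a'} \<times> {b<..<b'}) (\<lambda>z. F (fst z) * G (snd z))"
  using solution unfolding visc_solution_def by auto

lemma subsolution_test:
  assumes "open I" "I \<subseteq> {a<..<a'}" "x0 \<in> I" "open J" "J \<subseteq> {b<..<b'}" "y0 \<in> J"
    and "\<forall>x\<in>I. F x \<le> cubic x0 (F x0) p1 p2 p3 x" "\<forall>y\<in>J. G y \<le> cubic y0 (G y0) r1 r2 r3 y"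
  shows "0 \<le> pucci_plus lam Lam (2*p2*G y0) (p1*r1) (2*F x0*r2) + \<mu> * (F x0 * G y0)"
proof -
  have "F x * G y \<le> cubic x0 (F x0) p1 p2 p3 x * cubic y0 (G y0) r1 r2 r3 y" if "x \<in> I" "y \<in> J" for x y
  proof -
    have "0 \<le> F x" "0 \<le> G y" using that assms(2,5) F.nonneg G.nonneg by auto
    then show ?thesis using that assms(7,8) by (intro mult_mono) auto
  qed
  then have "0 \<le> pucci_plus lam Lam (2*p2*G y0) (p1*r1) (2*F x0*r2) + \<mu> * (F (fst (x0, y0)) * G (snd (x0, y0)))"
    by (intro visc_sub_cubic_product[OF product_visc_sub open_Times[OF assms(1,4)]]) (use assms in auto)
  then show ?thesis by simp
qed

lemma supersolution_test:
  assumes "open I" "I \<subseteq> {a<..<a'}" "x0 \<in> I" "open J" "J \<subseteq> {b<..<b'}" "y0 \<in> J"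
    and "\<forall>x\<in>I. cubic x0 (F x0) p1 p2 p3 x \<le> F x" "\<forall>y\<in>J. cubic y0 (G y0) r1 r2 r3 y \<le> G y"
  shows "(Lam - lam) * \<bar>p1 * r1\<bar> \<le> - (lam + Lam) * (p2 * G y0 + r2 * F x0)"
proof -
  let ?R = "cubic y0 (G y0) r1 r2 r3"
  \<comment> \<open>where the second factor of the test function is negative the comparison fails, so cut it off\<close>
  define J' where "J' = J \<inter> {y. 0 < ?R y}"
  have J': "open J'" "J' \<subseteq> {b<..<b'}" "y0 \<in> J'"
    unfolding J'_def using assms(4-6) G.positive
    by (auto intro!: open_Int open_Collect_less continuous_on_const continuous_on_cubic)
  have "cubic x0 (F x0) p1 p2 p3 x * ?R y \<le> F x * G y" if "x \<in> I" "y \<in> J'" for x y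
  proof -
    have "0 \<le> F x" "0 < ?R y" using that assms(2) F.nonneg unfolding J'_def by auto
    then show ?thesis using that assms(7,8) unfolding J'_def by (intro mult_mono) auto
  qed
  then have "pucci_plus lam Lam (2*p2*G y0) (p1*r1) (2*F x0*r2) + \<mu> * (F (fst (x0, y0)) * G (snd (x0, y0))) \<le> 0"
    by (intro visc_super_cubic_product[OF product_visc_super open_Times[OF assms(1) J'(1)]]) (use assms J' in auto)
  moreover have "(lam + Lam) / 2 * (2*p2*G y0 + 2*F x0*r2) + (Lam - lam) * \<bar>p1 * r1\<bar>
      \<le> pucci_plus lam Lam (2*p2*G y0) (p1*r1) (2*F x0*r2)"
    using pucci_plus_lower_bound ellipticity(2) by blast
  moreover have "0 < F x0" "0 < G y0" using assms(2,3,5,6) F.positive G.positive by auto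
  then have "0 \<le> \<mu> * (F x0 * G y0)" using eigenvalue_nonneg by simp
  ultimately have "(lam + Lam) / 2 * (2*p2*G y0 + 2*F x0*r2) + (Lam - lam) * \<bar>p1 * r1\<bar> \<le> 0"
    by simp
  moreover have "(lam + Lam) / 2 * (2*p2*G y0 + 2*F x0*r2) = (lam + Lam) * (p2 * G y0 + r2 * F x0)"
    by (simp add: field_simps)
  ultimately show ?thesis by linarith
qed

lemma F_visc_d2_ge: "visc_d2_ge {a<..<a'} F (\<lambda>x. - (\<mu> / lam) * F x)"
proof (rule visc_d2_geI)
  fix I x0 c1 c2 c3
  assume I: "open I" "I \<subseteq> {a<..<a'}" "x0 \<in> I" "\<forall>x\<in>I. F x \<le> cubic x0 (F x0) c1 c2 c3 x"
  obtain ym where ym: "ym \<in> {b<..<b'}" "\<forall>y\<in>{b..b'}. G y \<le> G ym"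
    using G.interior_maximum by blast
  have "\<forall>y\<in>{b<..<b'}. G y \<le> cubic ym (G ym) 0 0 0 y" using ym(2) by auto
  from subsolution_test[OF I(1-3) open_greaterThanLessThan order_refl ym(1) I(4) this]
  have "0 \<le> pucci_term lam Lam ((2*c2) * G ym) + \<mu> * F x0 * G ym"
    by (simp add: pucci_plus_diagonal ac_simps)
  moreover have "0 < F x0" "0 < G ym" using I(2,3) ym(1) F.positive G.positive by auto
  ultimately show "- (\<mu> / lam) * F x0 \<le> 2 * c2"
    using ellipticity(1) eigenvalue_nonneg by (intro pucci_term_scaled_lower_bound) auto
qed

lemma G_visc_d2_ge: "visc_d2_ge {b<..<b'} G (\<lambda>y. - (\<mu> / lam) * G y)"
proof (rule visc_d2_geI)
  fix J y0 c1 c2 c3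
  assume J: "open J" "J \<subseteq> {b<..<b'}" "y0 \<in> J" "\<forall>y\<in>J. G y \<le> cubic y0 (G y0) c1 c2 c3 y"
  obtain xm where xm: "xm \<in> {a<..<a'}" "\<forall>x\<in>{a..a'}. F x \<le> F xm"
    using F.interior_maximum by blast
  have "\<forall>x\<in>{a<..<a'}. F x \<le> cubic xm (F xm) 0 0 0 x" using xm(2) by auto
  from subsolution_test[OF open_greaterThanLessThan order_refl xm(1) J(1-3) this J(4)]
  have "0 \<le> pucci_term lam Lam ((2*c2) * F xm) + \<mu> * G y0 * F xm"
    by (simp add: pucci_plus_diagonal ac_simps)
  moreover have "0 < F xm" "0 < G y0" using J(2,3) xm(1) F.positive G.positive by auto
  ultimately show "- (\<mu> / lam) * G y0 \<le> 2 * c2"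
    using ellipticity(1) eigenvalue_nonneg by (intro pucci_term_scaled_lower_bound) auto
qed

lemma F_semiconcave: "\<exists>K\<ge>0. visc_d2_ge {a<..<a'} F (\<lambda>_. -K)"
  using F.semiconcave[OF divide_nonneg_pos[OF eigenvalue_nonneg ellipticity(1)] F_visc_d2_ge] .

lemma G_semiconcave: "\<exists>K\<ge>0. visc_d2_ge {b<..<b'} G (\<lambda>_. -K)"
  using G.semiconcave[OF divide_nonneg_pos[OF eigenvalue_nonneg ellipticity(1)] G_visc_d2_ge] .

lemma F_visc_d2_le: "\<exists>L>0. visc_d2_le {a<..<a'} F (\<lambda>x. L * F x)"
proof -
  obtain K where K: "0 \<le> K" "visc_d2_ge {b<..<b'} G (\<lambda>_. -K)"
    using G_semiconcave by blast
  obtain y1 \<sigma> where y1: "y1 \<in> {b<..<b'}" "\<forall>y\<in>{b<..<b'}. cubic y1 (G y1) \<sigma> (-K/2) 0 y \<le> G y"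
    using G.touching_parabola[OF K] by blast
  have G_y1: "0 < G y1" using y1(1) G.positive by auto
  define L where "L = K / G y1 + 1"
  have "0 < L" unfolding L_def using K(1) G_y1 by (simp add: add_nonneg_pos)
  moreover have "visc_d2_le {a<..<a'} F (\<lambda>x. L * F x)"
  proof (rule visc_d2_leI)
    fix I x0 c1 c2 c3
    assume I: "open I" "I \<subseteq> {a<..<a'}" "x0 \<in> I" "\<forall>x\<in>I. cubic x0 (F x0) c1 c2 c3 x \<le> F x"
    from supersolution_test[OF I(1-3) open_greaterThanLessThan order_refl y1(1) I(4) y1(2)]
    have "(Lam - lam) * \<bar>c1 * \<sigma>\<bar> \<le> - (lam + Lam) * (c2 * G y1 + (-K/2) * F x0)" .
    moreover have "0 \<le> (Lam - lam) * \<bar>c1 * \<sigma>\<bar>" using ellipticity(2) by simp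
    ultimately have "(lam + Lam) * (c2 * G y1 + (-K/2) * F x0) \<le> 0" by linarith
    then have "c2 * G y1 + (-K/2) * F x0 \<le> 0"
      using ellipticity by (simp add: mult_le_0_iff)
    then have "2 * c2 * G y1 \<le> K * F x0" by simp
    then have "2 * c2 \<le> K * F x0 / G y1" using G_y1 by (simp add: pos_le_divide_eq)
    also have "\<dots> \<le> L * F x0"
      unfolding L_def using F.positive I(2,3) by (fastforce simp: algebra_simps less_imp_le)
    finally show "2 * c2 \<le> L * F x0" .
  qed
  ultimately show ?thesis by blast
qed

lemma G_visc_d2_le: "\<exists>L>0. visc_d2_le {b<..<b'} G (\<lambda>y. L * G y)"
proof -
  obtain K where K: "0 \<le> K" "visc_d2_ge {a<..<a'} F (\<lambda>_. -K)"
    using F_semiconcave by blast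
  obtain x1 \<sigma> where x1: "x1 \<in> {a<..<a'}" "\<forall>x\<in>{a<..<a'}. cubic x1 (F x1) \<sigma> (-K/2) 0 x \<le> F x"
    using F.touching_parabola[OF K] by blast
  have F_x1: "0 < F x1" using x1(1) F.positive by auto
  define L where "L = K / F x1 + 1"
  have "0 < L" unfolding L_def using K(1) F_x1 by (simp add: add_nonneg_pos)
  moreover have "visc_d2_le {b<..<b'} G (\<lambda>y. L * G y)"
  proof (rule visc_d2_leI)
    fix J y0 c1 c2 c3
    assume J: "open J" "J \<subseteq> {b<..<b'}" "y0 \<in> J" "\<forall>y\<in>J. cubic y0 (G y0) c1 c2 c3 y \<le> G y"
    from supersolution_test[OF open_greaterThanLessThan order_refl x1(1) J(1-3) x1(2) J(4)]
    have "(Lam - lam) * \<bar>\<sigma> * c1\<bar> \<le> - (lam + Lam) * ((-K/2) * G y0 + c2 * F x1)" .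
    moreover have "0 \<le> (Lam - lam) * \<bar>\<sigma> * c1\<bar>" using ellipticity(2) by simp
    ultimately have "(lam + Lam) * ((-K/2) * G y0 + c2 * F x1) \<le> 0" by linarith
    then have "(-K/2) * G y0 + c2 * F x1 \<le> 0"
      using ellipticity by (simp add: mult_le_0_iff)
    then have "2 * c2 * F x1 \<le> K * G y0" by simp
    then have "2 * c2 \<le> K * G y0 / F x1" using F_x1 by (simp add: pos_le_divide_eq)
    also have "\<dots> \<le> L * G y0"
      unfolding L_def using G.positive J(2,3) by (fastforce simp: algebra_simps less_imp_le)
    finally show "2 * c2 \<le> L * G y0" .
  qed
  ultimately show ?thesis by blast
qed

lemma parabola_product_test:
  assumes "0 \<le> KF" "0 \<le> KG"
    and "open I" "I \<subseteq> {a<..<a'}" "x0 \<in> I" "open J" "J \<subseteq> {b<..<b'}" "y0 \<in> J"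
    and "\<forall>x\<in>I. cubic x0 (F x0) \<sigma>F (-KF/2) 0 x \<le> F x" "\<forall>y\<in>J. cubic y0 (G y0) \<sigma>G (-KG/2) 0 y \<le> G y"
  shows "(Lam - lam) * \<bar>\<sigma>F * \<sigma>G\<bar> \<le> (lam + Lam) / 2 * (KF + KG) * (F x0 + G y0)"
proof -
  have "(Lam - lam) * \<bar>\<sigma>F * \<sigma>G\<bar> \<le> - (lam + Lam) * ((-KF/2) * G y0 + (-KG/2) * F x0)"
    by (rule supersolution_test[OF assms(3-10)])
  also have "\<dots> = (lam + Lam) / 2 * (KF * G y0 + KG * F x0)"
    by (simp add: field_simps)
  also have "\<dots> \<le> (lam + Lam) / 2 * ((KF + KG) * (F x0 + G y0))"
  proof (rule mult_left_mono)
    have "0 \<le> KF * F x0" "0 \<le> KG * G y0"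
      using assms(1,2,4,5,7,8) F.positive G.positive by (auto simp: less_imp_le)
    then show "KF * G y0 + KG * F x0 \<le> (KF + KG) * (F x0 + G y0)" by (simp add: algebra_simps)
  qed (use ellipticity in simp)
  finally show ?thesis by (simp only: mult.assoc)
qed

lemma corner_estimate:
  "\<exists>K\<ge>0. \<exists>c>0. \<forall>\<epsilon>>0. \<exists>x0\<in>{a<..<a'}. \<exists>y0\<in>{b<..<b'}.
     F x0 < \<epsilon> \<and> G y0 < \<epsilon> \<and> (Lam - lam) * c \<le> K * (F x0 + G y0)"
proof -
  obtain KF where KF: "0 \<le> KF" "visc_d2_ge {a<..<a'} F (\<lambda>_. -KF)"
    using F_semiconcave by blast
  obtain KG where KG: "0 \<le> KG" "visc_d2_ge {b<..<b'} G (\<lambda>_. -KG)"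
    using G_semiconcave by blast
  obtain cF where cF: "0 < cF" and F_near: "\<forall>\<epsilon>>0. \<exists>\<eta> x0 \<sigma>. 0 < \<eta> \<and> a + \<eta> \<le> a' \<and>
      x0 \<in> {a<..<a+\<eta>} \<and> F x0 < \<epsilon> \<and> cF \<le> \<sigma> \<and> (\<forall>x\<in>{a<..<a+\<eta>}. cubic x0 (F x0) \<sigma> (-KF/2) 0 x \<le> F x)"
    using F_visc_d2_le F.touching_parabolas_near_left_end[OF KF] by blast
  obtain cG where cG: "0 < cG" and G_near: "\<forall>\<epsilon>>0. \<exists>\<eta> y0 \<sigma>. 0 < \<eta> \<and> b + \<eta> \<le> b' \<and>
      y0 \<in> {b<..<b+\<eta>} \<and> G y0 < \<epsilon> \<and> cG \<le> \<sigma> \<and> (\<forall>y\<in>{b<..<b+\<eta>}. cubic y0 (G y0) \<sigma> (-KG/2) 0 y \<le> G y)"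
    using G_visc_d2_le G.touching_parabolas_near_left_end[OF KG] by blast
  have "\<exists>x0\<in>{a<..<a'}. \<exists>y0\<in>{b<..<b'}. F x0 < \<epsilon> \<and> G y0 < \<epsilon> \<and>
      (Lam - lam) * (cF * cG) \<le> (lam + Lam) / 2 * (KF + KG) * (F x0 + G y0)" if "0 < \<epsilon>" for \<epsilon>
  proof -
    obtain \<eta>F x0 \<sigma>F where F_touch: "0 < \<eta>F" "a + \<eta>F \<le> a'" "x0 \<in> {a<..<a+\<eta>F}" "F x0 < \<epsilon>" "cF \<le> \<sigma>F"
        "\<forall>x\<in>{a<..<a+\<eta>F}. cubic x0 (F x0) \<sigma>F (-KF/2) 0 x \<le> F x"
      using F_near \<open>0 < \<epsilon>\<close> by blast
    obtain \<eta>G y0 \<sigma>G where G_touch: "0 < \<eta>G" "b + \<eta>G \<le> b'" "y0 \<in> {b<..<b+\<eta>G}" "G y0 < \<epsilon>" "cG \<le> \<sigma>G"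
        "\<forall>y\<in>{b<..<b+\<eta>G}. cubic y0 (G y0) \<sigma>G (-KG/2) 0 y \<le> G y"
      using G_near \<open>0 < \<epsilon>\<close> by blast
    have x0: "x0 \<in> {a<..<a'}" and y0: "y0 \<in> {b<..<b'}" using F_touch(2,3) G_touch(2,3) by auto
    have "cF * cG \<le> \<bar>\<sigma>F * \<sigma>G\<bar>"
      using cF cG F_touch(5) G_touch(5) by (smt (verit) abs_mult mult_mono)
    then have "(Lam - lam) * (cF * cG) \<le> (Lam - lam) * \<bar>\<sigma>F * \<sigma>G\<bar>"
      using ellipticity(2) by (simp add: mult_left_mono)
    also have "\<dots> \<le> (lam + Lam) / 2 * (KF + KG) * (F x0 + G y0)"
      by (rule parabola_product_test[OF KF(1) KG(1) open_greaterThanLessThan _ F_touch(3)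
            open_greaterThanLessThan _ G_touch(3) F_touch(6) G_touch(6)]) (use F_touch(2) G_touch(2) in auto)
    finally show ?thesis using x0 y0 F_touch(4) G_touch(4) by blast
  qed
  moreover have "0 \<le> (lam + Lam) / 2 * (KF + KG)" using ellipticity KF(1) KG(1) by simp
  moreover have "0 < cF * cG" using cF cG by simp
  ultimately show ?thesis by blast
qed

lemma ellipticity_constants_eq: "Lam = lam"
proof (rule ccontr)
  assume "Lam \<noteq> lam"
  then have gap: "0 < Lam - lam" using ellipticity(2) by simp
  obtain K c where K: "0 \<le> K" and c: "0 < c" and near: "\<forall>\<epsilon>>0. \<exists>x0\<in>{a<..<a'}. \<exists>y0\<in>{b<..<b'}.
      F x0 < \<epsilon> \<and> G y0 < \<epsilon> \<and> (Lam - lam) * c \<le> K * (F x0 + G y0)"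
    using corner_estimate by blast
  define \<epsilon> where "\<epsilon> = (Lam - lam) * c / (2 * K + 1)"
  have \<epsilon>: "0 < \<epsilon>" unfolding \<epsilon>_def using gap c K by simp
  then obtain x0 y0 where "F x0 < \<epsilon>" "G y0 < \<epsilon>" and est: "(Lam - lam) * c \<le> K * (F x0 + G y0)"
    using near by blast
  then have "K * (F x0 + G y0) \<le> K * (2 * \<epsilon>)" using K by (intro mult_left_mono) auto
  also have "\<dots> < (2 * K + 1) * \<epsilon>" using \<epsilon> by (simp add: algebra_simps)
  also have "\<dots> = (Lam - lam) * c" unfolding \<epsilon>_def using K by simp
  finally show False using est by simp
qed

end

lemma closure_open_rectangle:
  fixes a a' b b' :: real
  assumes "a < a'" "b < b'"
  shows "closure ({a<..<a'} \<times> {b<..<b'}) = {a..a'} \<times> {b..b'}"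
  using assms by (simp add: closure_Times)

lemma frontier_open_rectangle:
  fixes a a' b b' :: real
  assumes "a < a'" "b < b'"
  shows "frontier ({a<..<a'} \<times> {b<..<b'}) = {a..a'} \<times> {b..b'} - {a<..<a'} \<times> {b<..<b'}"
  using assms by (simp add: frontier_def closure_open_rectangle interior_open open_Times)

lemma separable_eq_slices:
  fixes u :: "'a \<times> 'b \<Rightarrow> 'c::field" and f :: "'a \<Rightarrow> 'c" and g :: "'b \<Rightarrow> 'c"
  assumes "\<forall>x y. (x, y) \<in> A \<times> B \<longrightarrow> u (x, y) = f x * g y"
    and "(x0, y0) \<in> A \<times> B" "u (x0, y0) \<noteq> 0" "(x, y) \<in> A \<times> B"
  shows "u (x, y) = u (x, y0) * (u (x0, y) / u (x0, y0))"
proof -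
  have "u (x, y) * u (x0, y0) = u (x, y0) * u (x0, y)"
    using assms(1,2,4) by (simp add: mult_ac)
  then show ?thesis using assms(3) by (simp add: field_simps)
qed

lemma dirichlet_profile_slice:
  fixes u :: "real \<times> real \<Rightarrow> real"
  assumes "a < a'" "b < b'" "continuous_on ({a..a'} \<times> {b..b'}) u"
    and "\<forall>z\<in>{a<..<a'} \<times> {b<..<b'}. 0 < u z"
    and "\<forall>z\<in>{a..a'} \<times> {b..b'} - {a<..<a'} \<times> {b<..<b'}. u z = 0"
  shows "y0 \<in> {b<..<b'} \<Longrightarrow> dirichlet_profile (\<lambda>x. u (x, y0)) a a'"
    and "x0 \<in> {a<..<a'} \<Longrightarrow> 0 < c \<Longrightarrow> dirichlet_profile (\<lambda>y. u (x0, y) / c) b b'"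
proof -
  assume y0: "y0 \<in> {b<..<b'}"
  have "continuous_on {a..a'} (\<lambda>x. u (x, y0))"
    by (rule continuous_on_compose2[OF assms(3)]) (use y0 in \<open>auto intro!: continuous_intros\<close>)
  then show "dirichlet_profile (\<lambda>x. u (x, y0)) a a'"
    using assms y0 by unfold_locales auto
next
  assume x0: "x0 \<in> {a<..<a'}" and "0 < c"
  have "continuous_on {b..b'} (\<lambda>y. u (x0, y))"
    by (rule continuous_on_compose2[OF assms(3)]) (use x0 in \<open>auto intro!: continuous_intros\<close>)
  then show "dirichlet_profile (\<lambda>y. u (x0, y) / c) b b'"
    using assms x0 \<open>0 < c\<close> by unfold_locales (auto intro!: continuous_intros)
qed

theorem proposition2p1:
  fixes lam Lam a b s \<mu> :: real
    and Q :: "(real \<times> real) set"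
    and u :: "real \<times> real \<Rightarrow> real"
  assumes "0 < lam" and "lam < Lam"
    and "0 < s" and "Q = {a<..<a + s} \<times> {b<..<b + s}"
    and "0 < \<mu>" and "\<mu> = pucci_principal_eigenvalue lam Lam Q"
    and "continuous_on (closure Q) u"
    and "\<forall>z\<in>Q. u z > 0"
    and "\<forall>z\<in>frontier Q. u z = 0"
    and "visc_solution lam Lam \<mu> Q u"
  shows "\<not> (\<exists>f g :: real \<Rightarrow> real. \<forall>x y. (x, y) \<in> Q \<longrightarrow> u (x, y) = f x * g y)"
proof
  assume "\<exists>f g :: real \<Rightarrow> real. \<forall>x y. (x, y) \<in> Q \<longrightarrow> u (x, y) = f x * g y"
  then obtain f g :: "real \<Rightarrow> real" where fg: "\<forall>x y. (x, y) \<in> Q \<longrightarrow> u (x, y) = f x * g y" by blast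
  define x0 y0 where "x0 = a + s/2" and "y0 = b + s/2"
  have center: "x0 \<in> {a<..<a+s}" "y0 \<in> {b<..<b+s}" unfolding x0_def y0_def using assms(3) by auto
  define F G where "F x = u (x, y0)" and "G y = u (x0, y) / u (x0, y0)" for x y
  have "0 < u (x0, y0)" using assms(4,8) center by auto
  have "visc_solution lam Lam \<mu> ({a<..<a+s} \<times> {b<..<b+s}) (\<lambda>z. F (fst z) * G (snd z))"
  proof (rule visc_solution_transfer)
    show "visc_solution lam Lam \<mu> ({a<..<a+s} \<times> {b<..<b+s}) u" using assms(4,10) by simp
    show "F (fst z) * G (snd z) = u z" if "z \<in> {a<..<a+s} \<times> {b<..<b+s}" for z
      using separable_eq_slices[of _ _ u f g x0 y0 "fst z" "snd z"] fg assms(4) center that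
        \<open>0 < u (x0, y0)\<close> unfolding F_def G_def by auto
  qed
  moreover have "dirichlet_profile F a (a+s)" "dirichlet_profile G b (b+s)"
    unfolding F_def G_def using dirichlet_profile_slice[of a "a+s" b "b+s" u] assms(3,4,7,8,9) center
      \<open>0 < u (x0, y0)\<close> by (simp_all add: closure_open_rectangle frontier_open_rectangle)
  ultimately interpret separable_solution F G a "a+s" b "b+s" lam Lam \<mu>
    using assms(1,2,5) by (simp add: separable_solution_def separable_solution_axioms_def)
  show False using ellipticity_constants_eq assms(2) by simp
qed

end
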